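(* Let $u^*:\Omega\to\mathbb{R}$, the sample points $\bm x_1,\dots,\bm x_{N_1}$, the affine functions $u_1,\dots,u_{N_1}$, the index sets $J_{\geq,i},J_{\leq,i}$ and the approximations $\hat f_{\mathrm{L,d}},\hat f_{\mathrm{L,c}}$ be as in the context (with $N_s=N_1$). Suppose every sample point $\bm x_i$ lies in the interior of its UO region $\Gamma(\bm x_i)$, and suppose $$\min_{j\in J_{\geq,i}}u_j(\bm x_k)\le u_k(\bm x_k)\quad\text{and}\quad \max_{j\in J_{\leq,i}}u_j(\bm x_k)\ge u_k(\bm x_k)\qquad\forall\, i,k\in\{1,\dots,N_1\}.$$ Then for every $i\in\{1,\dots,N_1\}$, $$\hat f_{\mathrm{L,d}}(\bm x)=u^*(\bm x)\quad\text{and}\quad \hat f_{\mathrm{L,c}}(\bm x)=u^*(\bm x)\qquad\forall\,\bm x\in\Gamma(\bm x_i).$$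
   Context: Let $\Omega\subseteq\mathbb{R}^{n_x}$ be a convex polyhedron (a hyperbox) and $u^*:\Omega\to\mathbb{R}$ a continuous piecewise affine (PWA) function: $\Omega$ is the union of finitely many closed convex polyhedra (local regions) with pairwise disjoint interiors, and on each local region $u^*$ coincides with an affine function. (In the paper $u^*$ is the first input component of the explicit linear MPC optimal control law, which is continuous PWA.) Let $\ell_1,\dots,\ell_M$ be the distinct affine functions appearing as local pieces of $u^*$. A unique order (UO) region is a closed convex polyhedron contained in a local region such that, for all $a,b$, the order (sign of $\ell_a-\ell_b$) does not change in its interior; $\Omega$ is the union of finitely many UO regions. A sample point $\bm x_i\in\Omega$ lies in the interior of a UO region iff no two distinct functions among $\ell_1,\dots,\ell_M$ take the same value at $\bm x_i$; this UO region is denoted $\Gamma(\bm x_i)$. To each sample point $\bm x_i$ ($i=1,\dots,N_s$) is associated the affine function $u_i$ equal to the local piece of $u^*$ on $\Gamma(\bm x_i)$, so $u_i(\bm x)=u^*(\bm x)$ on $\Gamma(\bm x_i)$. Define $J_{\geq,i}=\{j\in\{1,\dots,N_s\}: u_j(\bm x_i)\ge u_i(\bm x_i)\}$, $J_{\leq,i}=\{j\in\{1,\dots,N_s\}: u_j(\bm x_i)\le u_i(\bm x_i)\}$, the disjunctive lattice PWA approximation $\hat f_{\mathrm{L,d}}(\bm x)=\max_{i=1,\dots,N_s}\min_{j\in J_{\geq,i}}u_j(\bm x)$ and the conjunctive lattice PWA approximation $\hat f_{\mathrm{L,c}}(\bm x)=\min_{i=1,\dots,N_s}\max_{j\in J_{\leq,i}}u_j(\bm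 x)$. *)

theory Defs
  imports "HOL-Analysis.Analysis"
begin

definition affine_fun :: "(real^'n \<Rightarrow> real) \<Rightarrow> bool" where
  "affine_fun f \<longleftrightarrow> (\<exists>a b. \<forall>x. f x = a \<bullet> x + b)"

definition pwa_on ::
  "(real^'n) set \<Rightarrow> (real^'n \<Rightarrow> real) \<Rightarrow> (real^'n) set set \<Rightarrow> ((real^'n) set \<Rightarrow> real^'n \<Rightarrow> real) \<Rightarrow> bool" where
  "pwa_on \<Omega> u Rs pc \<longleftrightarrow>
     continuous_on \<Omega> u \<and> finite Rs \<and> \<Union>Rs = \<Omega> \<and>
     (\<forall>R\<in>Rs. polyhedron R \<and> affine_fun (pc R) \<and> (\<forall>x\<in>R. u x = pc R x)) \<and>
     (\<forall>R\<in>Rs. \<forall>R'\<in>Rs. R \<noteq> R' \<longrightarrow> interior R \<inter> interior R' = {})"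

text \<open>Unique order region: closed convex polyhedron contained in a local region such that the
  order of any two local affine pieces does not change in its interior.\<close>
definition uo_region ::
  "(real^'n) set set \<Rightarrow> ((real^'n) set \<Rightarrow> real^'n \<Rightarrow> real) \<Rightarrow> (real^'n) set \<Rightarrow> bool" where
  "uo_region Rs pc G \<longleftrightarrow> polyhedron G \<and> (\<exists>R\<in>Rs. G \<subseteq> R) \<and>
     (\<forall>a\<in>pc ` Rs. \<forall>b\<in>pc ` Rs. \<forall>x\<in>interior G. \<forall>y\<in>interior G.
        sgn (a x - b x) = sgn (a y - b y))"

definition J_ge :: "nat \<Rightarrow> (nat \<Rightarrow> real^'n) \<Rightarrow> (nat \<Rightarrow> real^'n \<Rightarrow> real) \<Rightarrow> nat \<Rightarrow> nat set" where
  "J_ge N xs u i = {j \<in> {1..N}. u j (xs i) \<ge> u i (xs i)}"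

definition J_le :: "nat \<Rightarrow> (nat \<Rightarrow> real^'n) \<Rightarrow> (nat \<Rightarrow> real^'n \<Rightarrow> real) \<Rightarrow> nat \<Rightarrow> nat set" where
  "J_le N xs u i = {j \<in> {1..N}. u j (xs i) \<le> u i (xs i)}"

definition f_Ld :: "nat \<Rightarrow> (nat \<Rightarrow> real^'n) \<Rightarrow> (nat \<Rightarrow> real^'n \<Rightarrow> real) \<Rightarrow> real^'n \<Rightarrow> real" where
  "f_Ld N xs u x = (MAX i\<in>{1..N}. MIN j\<in>J_ge N xs u i. u j x)"

definition f_Lc :: "nat \<Rightarrow> (nat \<Rightarrow> real^'n) \<Rightarrow> (nat \<Rightarrow> real^'n \<Rightarrow> real) \<Rightarrow> real^'n \<Rightarrow> real" where
  "f_Lc N xs u x = (MIN i\<in>{1..N}. MAX j\<in>J_le N xs u i. u j x)"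

end

theory Submission
  imports Defs
begin

text \<open>The local pieces of \<open>u\<^sup>*\<close> are affine, so on a unique order region their pairwise order,
  read off at a single interior sample point, persists on the whole closed region. Hence on
  \<open>\<Gamma>(x\<^sub>k)\<close> the indices of \<open>J\<^sub>\<ge>\<^sub>,\<^sub>k\<close> give pieces lying above \<open>u\<^sub>k\<close>, so the \<open>k\<close>-th term of
  the disjunctive form equals \<open>u\<^sub>k\<close>; the hypothesis at \<open>x\<^sub>k\<close> supplies, for every other term,
  a piece below \<open>u\<^sub>k\<close> at \<open>x\<^sub>k\<close> and hence on all of \<open>\<Gamma>(x\<^sub>k)\<close>. The conjunctive form is the
  disjunctive form of the negated pieces.\<close>

lemma affine_fun_le_on_closure:
  assumes "affine_fun a" "affine_fun b" "\<forall>y\<in>S. a y \<le> b y" "x \<in> closure S"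
  shows "a x \<le> b x"
proof -
  obtain c d where a: "\<And>y. a y = c \<bullet> y + d" using assms(1) unfolding affine_fun_def by blast
  obtain c' d' where b: "\<And>y. b y = c' \<bullet> y + d'" using assms(2) unfolding affine_fun_def by blast
  have "{y. a y \<le> b y} = {y. (c - c') \<bullet> y \<le> d' - d}"
    by (auto simp: a b inner_diff_left)
  then have "closed {y. a y \<le> b y}" by (simp add: closed_halfspace_le)
  with assms(3) have "closure S \<subseteq> {y. a y \<le> b y}" by (intro closure_minimal) auto
  with assms(4) show ?thesis by blast
qed

lemma uo_region_order_preserved:
  assumes G: "uo_region Rs pc G" and z: "z \<in> interior G"
    and R: "R \<in> Rs" "R' \<in> Rs" and aff: "affine_fun (pc R)" "affine_fun (pc R')"
    and le: "pc R z \<le> pc R' z" and x: "x \<in> G"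
  shows "pc R x \<le> pc R' x"
proof (rule affine_fun_le_on_closure[OF aff])
  have sgn_const: "sgn (pc R y - pc R' y) = sgn (pc R z - pc R' z)" if "y \<in> interior G" for y
    using G R z that unfolding uo_region_def by blast
  show "\<forall>y\<in>interior G. pc R y \<le> pc R' y"
  proof
    fix y assume "y \<in> interior G"
    then have "sgn (pc R y - pc R' y) \<le> 0" using sgn_const le by simp
    then show "pc R y \<le> pc R' y" by simp
  qed
  have "convex G" "closed G" using G unfolding uo_region_def
    by (auto intro: polyhedron_imp_convex polyhedron_imp_closed)
  then have "closure (interior G) = G"
    using convex_closure_interior z closure_closed by (metis empty_iff)
  with x show "x \<in> closure (interior G)" by simp
qed

lemma J_ge_subset: "J_ge N xs u i \<subseteq> {1..N}"
  by (auto simp: J_ge_def)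

lemma J_ge_finite: "finite (J_ge N xs u i)"
  by (rule finite_subset[OF J_ge_subset]) simp

lemma J_ge_self: "i \<in> {1..N} \<Longrightarrow> i \<in> J_ge N xs u i"
  by (simp add: J_ge_def)

lemma J_le_eq_J_ge_uminus: "J_le N xs u i = J_ge N xs (\<lambda>j y. - u j y) i"
  unfolding J_le_def J_ge_def by simp

lemma MIN_uminus:
  fixes f :: "'a \<Rightarrow> 'b::linordered_ab_group_add"
  assumes "finite J" "J \<noteq> {}"
  shows "(MIN j\<in>J. - f j) = - (MAX j\<in>J. f j)"
proof -
  have "- (MAX j\<in>J. f j) = Min (uminus ` f ` J)"
    using assms by (intro minus_Max_eq_Min) auto
  also have "\<dots> = (MIN j\<in>J. - f j)" by (simp only: image_image)
  finally show ?thesis by (rule sym)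
qed

lemma MAX_uminus:
  fixes f :: "'a \<Rightarrow> 'b::linordered_ab_group_add"
  assumes "finite J" "J \<noteq> {}"
  shows "(MAX j\<in>J. - f j) = - (MIN j\<in>J. f j)"
proof -
  have "- (MIN j\<in>J. f j) = Max (uminus ` f ` J)"
    using assms by (intro minus_Min_eq_Max) auto
  also have "\<dots> = (MAX j\<in>J. - f j)" by (simp only: image_image)
  finally show ?thesis by (rule sym)
qed

lemma MIN_J_ge_uminus:
  assumes "i \<in> {1..N}"
  shows "(MIN j\<in>J_ge N xs (\<lambda>j y. - u j y) i. - u j x) = - (MAX j\<in>J_le N xs u i. u j x)"
proof -
  have "finite (J_le N xs u i)"
    unfolding J_le_eq_J_ge_uminus by (rule J_ge_finite)
  moreover have "J_le N xs u i \<noteq> {}"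
    unfolding J_le_eq_J_ge_uminus using J_ge_self[OF assms] by blast
  ultimately show ?thesis
    unfolding J_le_eq_J_ge_uminus[symmetric] by (rule MIN_uminus)
qed

lemma f_Ld_uminus_eq_uminus_f_Lc:
  assumes "1 \<le> N"
  shows "f_Ld N xs (\<lambda>j y. - u j y) x = - f_Lc N xs u x"
proof -
  have "f_Ld N xs (\<lambda>j y. - u j y) x = (MAX i\<in>{1..N}. - (MAX j\<in>J_le N xs u i. u j x))"
    unfolding f_Ld_def by (intro arg_cong[where f = Max] image_cong) (auto simp: MIN_J_ge_uminus)
  also have "\<dots> = - f_Lc N xs u x"
    unfolding f_Lc_def using assms by (intro MAX_uminus) auto
  finally show ?thesis .
qed

lemma f_Ld_eq_sample_piece:
  assumes k: "k \<in> {1..N}"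
    and order: "\<And>a b. a \<in> {1..N} \<Longrightarrow> b \<in> {1..N} \<Longrightarrow> u a (xs k) \<le> u b (xs k) \<Longrightarrow> u a x \<le> u b x"
    and cond: "\<And>i. i \<in> {1..N} \<Longrightarrow> (MIN j\<in>J_ge N xs u i. u j (xs k)) \<le> u k (xs k)"
  shows "f_Ld N xs u x = u k x"
proof -
  have own_term: "(MIN j\<in>J_ge N xs u k. u j x) = u k x"
  proof (rule antisym)
    show "(MIN j\<in>J_ge N xs u k. u j x) \<le> u k x"
      by (rule Min_le) (auto simp: J_ge_finite intro: J_ge_self[OF k])
    show "u k x \<le> (MIN j\<in>J_ge N xs u k. u j x)"
      using J_ge_self[OF k, of xs u] J_ge_finite[of N xs u k]
      by (subst Min_ge_iff) (auto intro!: order[OF k] simp: J_ge_def)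
  qed
  have other_term: "(MIN j\<in>J_ge N xs u i. u j x) \<le> u k x" if i: "i \<in> {1..N}" for i
  proof -
    obtain j where j: "j \<in> J_ge N xs u i" "u j (xs k) \<le> u k (xs k)"
      using cond[OF i] J_ge_self[OF i, of xs u] J_ge_finite[of N xs u i] by (subst (asm) Min_le_iff) auto
    then have "u j x \<le> u k x" using order[OF _ k] J_ge_subset by blast
    moreover have "(MIN j\<in>J_ge N xs u i. u j x) \<le> u j x" using j(1) J_ge_finite[of N xs u i] by simp
    ultimately show ?thesis by linarith
  qed
  show ?thesis
    unfolding f_Ld_def
  proof (rule antisym)
    show "(MAX i\<in>{1..N}. MIN j\<in>J_ge N xs u i. u j x) \<le> u k x"
      using k other_term by (subst Max_le_iff) auto
    show "u k x \<le> (MAX i\<in>{1..N}. MIN j\<in>J_ge N xs u i. u j x)"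
      using k own_term by (subst Max_ge_iff) (auto intro!: bexI[of _ k])
  qed
qed

lemma f_Lc_eq_sample_piece:
  assumes k: "k \<in> {1..N}"
    and order: "\<And>a b. a \<in> {1..N} \<Longrightarrow> b \<in> {1..N} \<Longrightarrow> u a (xs k) \<le> u b (xs k) \<Longrightarrow> u a x \<le> u b x"
    and cond: "\<And>i. i \<in> {1..N} \<Longrightarrow> (MAX j\<in>J_le N xs u i. u j (xs k)) \<ge> u k (xs k)"
  shows "f_Lc N xs u x = u k x"
proof -
  have order_neg: "- u a x \<le> - u b x"
    if "a \<in> {1..N}" "b \<in> {1..N}" "- u a (xs k) \<le> - u b (xs k)" for a b
    using order[of b a] that by simp
  have cond_neg: "(MIN j\<in>J_ge N xs (\<lambda>j y. - u j y) i. - u j (xs k)) \<le> - u k (xs k)"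
    if "i \<in> {1..N}" for i
    using cond[OF that] by (simp add: MIN_J_ge_uminus[OF that])
  have "f_Ld N xs (\<lambda>j y. - u j y) x = - u k x"
    by (rule f_Ld_eq_sample_piece[where u = "\<lambda>j y. - u j y", OF k order_neg cond_neg])
  with k show ?thesis by (simp add: f_Ld_uminus_eq_uminus_f_Lc)
qed

theorem mainTheorem1:
  fixes lo hi :: "real^'n" and \<Omega> :: "(real^'n) set" and ustar :: "real^'n \<Rightarrow> real"
    and Rs :: "(real^'n) set set" and pc :: "(real^'n) set \<Rightarrow> real^'n \<Rightarrow> real"
    and N :: nat and xs :: "nat \<Rightarrow> real^'n" and u :: "nat \<Rightarrow> real^'n \<Rightarrow> real"
    and \<Gamma> :: "nat \<Rightarrow> (real^'n) set"
  assumes box: "\<Omega> = cbox lo hi"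
    and pwa: "pwa_on \<Omega> ustar Rs pc"
    and samples: "\<forall>i\<in>{1..N}. xs i \<in> \<Omega>"
    and uo: "\<forall>i\<in>{1..N}. uo_region Rs pc (\<Gamma> i) \<and> xs i \<in> interior (\<Gamma> i)"
    and piece: "\<forall>i\<in>{1..N}. \<exists>R\<in>Rs. \<Gamma> i \<subseteq> R \<and> u i = pc R"
    and cond: "\<forall>i\<in>{1..N}. \<forall>k\<in>{1..N}.
        (MIN j\<in>J_ge N xs u i. u j (xs k)) \<le> u k (xs k) \<and>
        (MAX j\<in>J_le N xs u i. u j (xs k)) \<ge> u k (xs k)"
  shows "\<forall>i\<in>{1..N}. \<forall>x\<in>\<Gamma> i. f_Ld N xs u x = ustar x \<and> f_Lc N xs u x = ustar x"
proof (intro ballI)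
  fix k x assume k: "k \<in> {1..N}" and x: "x \<in> \<Gamma> k"
  have aff: "affine_fun (pc R)" if "R \<in> Rs" for R using pwa that unfolding pwa_on_def by auto
  have G: "uo_region Rs pc (\<Gamma> k)" and z: "xs k \<in> interior (\<Gamma> k)" using uo k by auto
  have order: "u a x \<le> u b x"
    if ab: "a \<in> {1..N}" "b \<in> {1..N}" and le: "u a (xs k) \<le> u b (xs k)" for a b
  proof -
    obtain Ra Rb where R: "Ra \<in> Rs" "Rb \<in> Rs" and "u a = pc Ra" "u b = pc Rb"
      using piece ab by blast
    with uo_region_order_preserved[OF G z R aff[OF R(1)] aff[OF R(2)] _ x] le show ?thesis
      by simp
  qed
  obtain Rk where "Rk \<in> Rs" "\<Gamma> k \<subseteq> Rk" "u k = pc Rk" using piece k by blast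
  with pwa x have "ustar x = u k x" unfolding pwa_on_def by auto
  moreover have "f_Ld N xs u x = u k x"
    by (rule f_Ld_eq_sample_piece[where u = u, OF k order]) (use cond k in blast)+
  moreover have "f_Lc N xs u x = u k x"
    by (rule f_Lc_eq_sample_piece[where u = u, OF k order]) (use cond k in blast)+
  ultimately show "f_Ld N xs u x = ustar x \<and> f_Lc N xs u x = ustar x" by simp
qed

end
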